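(* Let $m\geq 1$, $n\geq 3$, let $k\in\{1,\ldots,m\}$ and let $i,j\in V^k$. A walk of length $n-1$ from $i$ to $j$ exists in $D^m_n$ if and only if one of the following holds: $i=1$ and $j=(k-1)(n-1)+n$; or $i=(k-1)(n-1)+2$ and $j=1$; or $i=(k-1)(n-1)+\ell$ and $j=i-1$ for some $\ell\in\{3,\ldots,n\}$. Moreover, in each of these cases there is exactly one walk of length $n-1$ from $i$ to $j$ in $D^m_n$.
   Context: For integers $m\geq 1$, $n\geq 3$, the oriented Dutch windmill graph $D^m_n$ is the directed graph with vertex set $V=\{1,2,\ldots,m(n-1)+1\}$ whose directed edges $(a,b)$ are exactly: $(1,(k-1)(n-1)+2)$ for $k\in\{1,\ldots,m\}$; $((k-1)(n-1)+i,(k-1)(n-1)+i+1)$ for $k\in\{1,\ldots,m\}$ and $i\in\{2,\ldots,n-1\}$; and $((k-1)(n-1)+n,1)$ for $k\in\{1,\ldots,m\}$. For $k\in\{1,\ldots,m\}$, $V^k=\{1\}\cup\{(k-1)(n-1)+\ell:\ \ell=2,\ldots,n\}$ is the vertex set of the $k$-th directed cycle $\langle 1,(k-1)(n-1)+2,\ldots,(k-1)(n-1)+n,1\rangle$. A walk is a sequence of vertices $\langle v_1,\ldots,v_r\rangle$ in which each $(v_t,v_{t+1})$ is an edge; its length is $r-1$. *)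

theory Defs
  imports Main
begin

definition dw_verts :: "nat \<Rightarrow> nat \<Rightarrow> nat set" where
  "dw_verts m n = {1..m*(n-1)+1}"

definition dw_edge :: "nat \<Rightarrow> nat \<Rightarrow> nat \<Rightarrow> nat \<Rightarrow> bool" where
  "dw_edge m n a b \<longleftrightarrow>
     (\<exists>k\<in>{1..m}. a = 1 \<and> b = (k-1)*(n-1)+2)
   \<or> (\<exists>k\<in>{1..m}. \<exists>i\<in>{2..n-1}. a = (k-1)*(n-1)+i \<and> b = (k-1)*(n-1)+i+1)
   \<or> (\<exists>k\<in>{1..m}. a = (k-1)*(n-1)+n \<and> b = 1)"

definition dw_cycle :: "nat \<Rightarrow> nat \<Rightarrow> nat set" where
  "dw_cycle n k = {1} \<union> {(k-1)*(n-1)+l | l. l \<in> {2..n}}"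

definition dw_walk :: "nat \<Rightarrow> nat \<Rightarrow> nat list \<Rightarrow> bool" where
  "dw_walk m n w \<longleftrightarrow> w \<noteq> [] \<and> set w \<subseteq> dw_verts m n \<and>
     (\<forall>t. Suc t < length w \<longrightarrow> dw_edge m n (w ! t) (w ! Suc t))"

definition dw_walk_len_from_to :: "nat \<Rightarrow> nat \<Rightarrow> nat \<Rightarrow> nat \<Rightarrow> nat \<Rightarrow> nat list \<Rightarrow> bool" where
  "dw_walk_len_from_to m n r i j w \<longleftrightarrow>
     dw_walk m n w \<and> length w = r + 1 \<and> hd w = i \<and> last w = j"

end

theory Submission
  imports Defs
begin

text \<open>Give every vertex a phase modulo \<open>n\<close>: the hub \<open>1\<close> has phase 0 and the \<open>l\<close>-th vertex
  \<open>(k-1)(n-1)+l\<close> of a cycle has phase \<open>l - 1\<close>. Every edge raises the phase by one, so a walk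
  of length \<open>n - 1\<close> ends one phase below its start. The phase is injective on each cycle
  \<open>V\<^sup>k\<close>, so between vertices of \<open>V\<^sup>k\<close> such a walk can only end at the predecessor of its
  start on that cycle, and going once around the cycle provides one. A walk with at most \<open>n\<close>
  vertices meets the hub at most once; every other vertex has a unique successor and a unique
  predecessor, so the walk is determined by its start up to the hub and by its end after it.\<close>

definition dw_vertex :: "nat \<Rightarrow> nat \<Rightarrow> nat \<Rightarrow> nat" where
  "dw_vertex n k l = (k-1)*(n-1) + l"

definition dw_phase :: "nat \<Rightarrow> nat \<Rightarrow> nat" where
  "dw_phase n v = (if v = 1 then 0 else (v-2) mod (n-1) + 1)"

lemma dw_phase_less:
  assumes "n \<ge> 2"
  shows "dw_phase n v < n"
proof -
  have "(v-2) mod (n-1) < n-1"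
    using assms by simp
  then have "Suc ((v-2) mod (n-1)) < n"
    using assms by linarith
  then show ?thesis
    unfolding dw_phase_def by auto
qed

lemma dw_phase_eq_0_iff [simp]: "dw_phase n v = 0 \<longleftrightarrow> v = 1"
  unfolding dw_phase_def by auto

lemma dw_vertex_Suc: "dw_vertex n k (Suc l) = Suc (dw_vertex n k l)"
  unfolding dw_vertex_def by simp

lemma dw_vertex_neq_hub: "2 \<le> l \<Longrightarrow> dw_vertex n k l \<noteq> 1"
  unfolding dw_vertex_def by simp

lemma dw_vertex_eq_iff [simp]: "dw_vertex n k l = dw_vertex n k l' \<longleftrightarrow> l = l'"
  unfolding dw_vertex_def by simp

lemma dw_vertex_diff_1: "1 \<le> l \<Longrightarrow> dw_vertex n k l - 1 = dw_vertex n k (l - 1)"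
  unfolding dw_vertex_def by simp

lemma dw_phase_vertex:
  assumes "n \<ge> 2" and "l \<in> {2..n}"
  shows "dw_phase n (dw_vertex n k l) = l - 1"
proof -
  have "dw_vertex n k l - 2 = l - 2 + (k-1)*(n-1)"
    using assms unfolding dw_vertex_def by simp
  then have "(dw_vertex n k l - 2) mod (n-1) = (l - 2) mod (n-1)"
    by (simp only: mod_mult_self1)
  also have "\<dots> = l - 2"
    using assms by (intro mod_less) auto
  finally show ?thesis
    using assms dw_vertex_neq_hub[of l n k] by (auto simp add: dw_phase_def)
qed

lemma dw_cycle_eq: "dw_cycle n k = insert 1 (dw_vertex n k ` {2..n})"
  unfolding dw_cycle_def dw_vertex_def image_def by blast

lemma dw_cycle_cases:
  assumes "i \<in> dw_cycle n k"
  obtains "i = 1" | "i = dw_vertex n k 2" | l where "l \<in> {3..n}" "i = dw_vertex n k l"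
proof -
  consider "i = 1" | l where "l \<in> {2..n}" "i = dw_vertex n k l"
    using assms unfolding dw_cycle_eq by blast
  then show ?thesis
  proof cases
    case (2 l)
    show ?thesis
    proof (cases "l = 2")
      case True
      with 2 show ?thesis
        using that(2) by simp
    next
      case False
      with 2 show ?thesis
        using that(3)[of l] by auto
    qed
  qed (rule that(1))
qed

lemma dw_phase_inj_on_cycle:
  assumes "n \<ge> 2"
  shows "inj_on (dw_phase n) (dw_cycle n k)"
proof (rule inj_onI)
  fix u v
  assume "u \<in> dw_cycle n k" "v \<in> dw_cycle n k" and phase: "dw_phase n u = dw_phase n v"
  show "u = v"
  proof (cases "u = 1")
    case True
    then show ?thesis
      using phase by (metis dw_phase_eq_0_iff)
  next
    case False
    then have "v \<noteq> 1"
      using phase by (metis dw_phase_eq_0_iff)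
    obtain l l' where l: "l \<in> {2..n}" "u = dw_vertex n k l"
      and l': "l' \<in> {2..n}" "v = dw_vertex n k l'"
      using False \<open>v \<noteq> 1\<close> \<open>u \<in> dw_cycle n k\<close> \<open>v \<in> dw_cycle n k\<close>
      unfolding dw_cycle_eq by blast
    have "l - 1 = l' - 1"
      using phase dw_phase_vertex[OF assms] l l' by simp
    then have "l = l'"
      using l(1) l'(1) by auto
    with l l' show ?thesis
      by simp
  qed
qed

definition dw_cycle_pred :: "nat \<Rightarrow> nat \<Rightarrow> nat \<Rightarrow> nat" where
  "dw_cycle_pred n k i =
     (if i = 1 then dw_vertex n k n else if i = dw_vertex n k 2 then 1 else i - 1)"

lemma dw_cycle_pred_hub: "dw_cycle_pred n k 1 = dw_vertex n k n"
  unfolding dw_cycle_pred_def by simp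

lemma dw_cycle_pred_first: "dw_cycle_pred n k (dw_vertex n k 2) = 1"
  unfolding dw_cycle_pred_def using dw_vertex_neq_hub[of 2 n k] by simp

lemma dw_cycle_pred_vertex:
  "3 \<le> l \<Longrightarrow> dw_cycle_pred n k (dw_vertex n k l) = dw_vertex n k (l - 1)"
  unfolding dw_cycle_pred_def using dw_vertex_neq_hub[of l n k] dw_vertex_diff_1[of l n k] by simp

lemma dw_cycle_pred_iff:
  assumes "i \<in> dw_cycle n k"
  shows "((i = 1 \<and> j = dw_vertex n k n)
          \<or> (i = dw_vertex n k 2 \<and> j = 1)
          \<or> (\<exists>l\<in>{3..n}. i = dw_vertex n k l \<and> j = i - 1))
     \<longleftrightarrow> j = dw_cycle_pred n k i"
  using assms
proof (cases rule: dw_cycle_cases)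
  case 1
  then show ?thesis
    using dw_vertex_neq_hub[of _ n k, THEN not_sym] dw_cycle_pred_hub by auto
next
  case 2
  then show ?thesis
    using dw_vertex_neq_hub[of 2 n k] dw_cycle_pred_first by auto
next
  case (3 l)
  then show ?thesis
    using dw_vertex_neq_hub[of l n k] dw_cycle_pred_vertex[of l n k] dw_vertex_diff_1[of l n k]
    by auto
qed

lemma dw_cycle_pred_in_cycle:
  assumes "n \<ge> 2" and "i \<in> dw_cycle n k"
  shows "dw_cycle_pred n k i \<in> dw_cycle n k"
  using assms(2)
proof (cases rule: dw_cycle_cases)
  case 1
  then show ?thesis
    using assms(1) dw_cycle_pred_hub unfolding dw_cycle_eq by simp
next
  case 2
  then show ?thesis
    using dw_cycle_pred_first unfolding dw_cycle_eq by simp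
next
  case (3 l)
  then have "dw_cycle_pred n k i = dw_vertex n k (l - 1)" and "l - 1 \<in> {2..n}"
    using dw_cycle_pred_vertex[of l n k] by auto
  then show ?thesis
    unfolding dw_cycle_eq by blast
qed

lemma dw_phase_cycle_pred:
  assumes "n \<ge> 2" and "i \<in> dw_cycle n k"
  shows "dw_phase n (dw_cycle_pred n k i) = (dw_phase n i + (n-1)) mod n"
  using assms(2)
proof (cases rule: dw_cycle_cases)
  case 1
  then show ?thesis
    using assms(1) dw_phase_vertex[OF assms(1), of n k] dw_cycle_pred_hub
    by (simp add: dw_phase_def)
next
  case 2
  then show ?thesis
    using assms(1) dw_phase_vertex[OF assms(1), of 2 k] dw_cycle_pred_first
    by (simp add: dw_phase_def)
next
  case (3 l)
  have shift: "l - 1 + (n-1) = (l - 1 - 1) + n"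
    using 3 by auto
  have "dw_phase n i = l - 1"
    using 3 dw_phase_vertex[OF assms(1), of l k] by simp
  moreover have "(l - 1 + (n-1)) mod n = l - 1 - 1"
    unfolding shift mod_add_self2 by (intro mod_less) (use 3 in auto)
  moreover have "dw_phase n (dw_vertex n k (l - 1)) = l - 1 - 1"
    by (rule dw_phase_vertex[OF assms(1)]) (use 3 in auto)
  ultimately show ?thesis
    using 3 dw_cycle_pred_vertex[of l n k] by simp
qed

lemma dw_edgeE:
  assumes "dw_edge m n a b"
  obtains k where "a = 1" "b = dw_vertex n k 2"
  | k l where "l \<in> {2..n-1}" "a = dw_vertex n k l" "b = dw_vertex n k (Suc l)"
  | k where "a = dw_vertex n k n" "b = 1"
  using assms unfolding dw_edge_def dw_vertex_def by fastforce

lemma dw_phase_edge: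
  assumes "n \<ge> 2" and "dw_edge m n a b"
  shows "dw_phase n b = Suc (dw_phase n a) mod n"
  using assms(2)
proof (cases rule: dw_edgeE)
  case (1 k)
  then show ?thesis
    using assms(1) dw_phase_vertex[OF assms(1), of 2 k] by (simp add: dw_phase_def)
next
  case (2 k l)
  then show ?thesis
    using dw_phase_vertex[OF assms(1), of l k] dw_phase_vertex[OF assms(1), of "Suc l" k] by auto
next
  case (3 k)
  then show ?thesis
    using assms(1) dw_phase_vertex[OF assms(1), of n k] by simp
qed

lemma dw_edge_from_non_hub:
  assumes "n \<ge> 2" and "dw_edge m n a b" and "a \<noteq> 1"
  shows "b = (if dw_phase n a = n-1 then 1 else Suc a)"
  using assms(2)
proof (cases rule: dw_edgeE)
  case (2 k l)
  then have "dw_phase n a = l - 1"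
    using dw_phase_vertex[OF assms(1), of l k] by auto
  with 2 show ?thesis
    by (auto simp add: dw_vertex_Suc)
next
  case (3 k)
  then show ?thesis
    using assms(1) dw_phase_vertex[OF assms(1), of n k] by simp
qed (use assms(3) in simp)

lemma dw_edge_to_non_hub:
  assumes "n \<ge> 2" and "dw_edge m n a b" and "b \<noteq> 1"
  shows "a = (if dw_phase n b = 1 then 1 else b - 1)"
  using assms(2)
proof (cases rule: dw_edgeE)
  case (1 k)
  then show ?thesis
    using assms(1) dw_phase_vertex[OF assms(1), of 2 k] by simp
next
  case (2 k l)
  then have "dw_phase n b = l"
    using dw_phase_vertex[OF assms(1), of "Suc l" k] by auto
  with 2 show ?thesis
    by (auto simp add: dw_vertex_Suc)
qed (use assms(3) in simp)

lemma dw_edge_along_cycle: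
  assumes "k \<in> {1..m}" and "2 \<le> x" and "Suc x \<le> n"
  shows "dw_edge m n (dw_vertex n k x) (dw_vertex n k (Suc x))"
proof -
  have "x \<in> {2..n-1}"
    using assms(2,3) by auto
  moreover have "dw_vertex n k (Suc x) = dw_vertex n k x + 1"
    by (simp add: dw_vertex_Suc)
  ultimately show ?thesis
    using assms(1) unfolding dw_edge_def dw_vertex_def by blast
qed

lemma dw_walk_phase:
  assumes "n \<ge> 2" and "dw_walk m n w" and "t < length w"
  shows "dw_phase n (w ! t) = (dw_phase n (hd w) + t) mod n"
  using assms(3)
proof (induction t)
  case 0
  then show ?case
    using dw_phase_less[OF assms(1)] by (simp add: hd_conv_nth)
next
  case (Suc t)
  then have "dw_edge m n (w ! t) (w ! Suc t)"
    using assms(2) unfolding dw_walk_def by simp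
  then show ?case
    using Suc dw_phase_edge[OF assms(1)] by (simp add: mod_Suc_eq)
qed

lemma dw_walk_phase_last:
  assumes "n \<ge> 2" and "dw_walk m n w"
  shows "dw_phase n (last w) = (dw_phase n (hd w) + (length w - 1)) mod n"
proof -
  have "w \<noteq> []"
    using assms(2) unfolding dw_walk_def by simp
  then show ?thesis
    using dw_walk_phase[OF assms, of "length w - 1"] by (simp add: last_conv_nth)
qed

lemma dw_walk_hub_at_most_once:
  assumes "n \<ge> 2" and walk: "dw_walk m n w" and "length w \<le> n"
    and "s < length w" "t < length w" "w ! s = 1" "w ! t = 1"
  shows "s = t"
proof -
  define p where "p = dw_phase n (hd w)"
  have hub_phase: "(p + u) mod n = 0" if "u < length w" "w ! u = 1" for u
    using dw_walk_phase[OF assms(1) walk that(1)] that(2) unfolding p_def by (simp add: dw_phase_def)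
  have not_later: "\<not> u < v" if "v < length w" "w ! u = 1" "w ! v = 1" for u v
  proof
    assume "u < v"
    then have "(p + v) mod n = ((p + u) + (v - u)) mod n"
      by simp
    also have "\<dots> = ((p + u) mod n + (v - u)) mod n"
      by (rule mod_add_left_eq[symmetric])
    also have "\<dots> = v - u"
      using hub_phase[of u] \<open>u < v\<close> that \<open>length w \<le> n\<close> by simp
    finally show False
      using hub_phase[OF that(1,3)] \<open>u < v\<close> by simp
  qed
  show ?thesis
    using not_later[of t s] not_later[of s t] assms(4-7) by linarith
qed

lemma dw_walks_agree_until_hub:
  assumes "n \<ge> 2" and walk: "dw_walk m n w" and walk': "dw_walk m n w'"
    and "length w = length w'" and "hd w = hd w'"
    and "t < length w" and "\<forall>s<t. w ! s \<noteq> 1"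
  shows "w ! t = w' ! t"
  using assms(6,7)
proof (induction t)
  case 0
  then have "w \<noteq> []" "w' \<noteq> []"
    using \<open>length w = length w'\<close> by auto
  then show ?case
    using \<open>hd w = hd w'\<close> by (simp add: hd_conv_nth)
next
  case (Suc t)
  have same: "w ! t = w' ! t"
    using Suc by simp
  have off_hub: "w ! t \<noteq> 1"
    using Suc.prems by simp
  have "dw_edge m n (w ! t) (w ! Suc t)" "dw_edge m n (w' ! t) (w' ! Suc t)"
    using walk walk' Suc.prems \<open>length w = length w'\<close> unfolding dw_walk_def by simp_all
  then have "w ! Suc t = (if dw_phase n (w ! t) = n-1 then 1 else Suc (w ! t))"
    "w' ! Suc t = (if dw_phase n (w' ! t) = n-1 then 1 else Suc (w' ! t))"
    using dw_edge_from_non_hub[OF assms(1)] off_hub off_hub[unfolded same] by simp_all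
  then show ?case
    using same by simp
qed

lemma dw_walks_agree_after_hub:
  assumes "n \<ge> 2" and walk: "dw_walk m n w" and walk': "dw_walk m n w'"
    and "length w = length w'" and "last w = last w'"
    and "t < length w" and "\<forall>s. t < s \<longrightarrow> s < length w \<longrightarrow> w ! s \<noteq> 1"
  shows "w ! t = w' ! t"
proof -
  have "t \<le> length w - 1"
    using assms(6) by simp
  then show ?thesis
    using assms(7)
  proof (induction t rule: inc_induct)
    case base
    have "w \<noteq> []" "w' \<noteq> []"
      using assms(4,6) by auto
    then show ?case
      using \<open>last w = last w'\<close> \<open>length w = length w'\<close> by (simp add: last_conv_nth)
  next
    case (step u)
    have same: "w ! Suc u = w' ! Suc u"
      using step by simp
    have off_hub: "w ! Suc u \<noteq> 1"
      using step.prems step.hyps by simp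
    have "dw_edge m n (w ! u) (w ! Suc u)" "dw_edge m n (w' ! u) (w' ! Suc u)"
      using walk walk' step.hyps \<open>length w = length w'\<close> unfolding dw_walk_def by simp_all
    then have "w ! u = (if dw_phase n (w ! Suc u) = 1 then 1 else w ! Suc u - 1)"
      "w' ! u = (if dw_phase n (w' ! Suc u) = 1 then 1 else w' ! Suc u - 1)"
      using dw_edge_to_non_hub[OF assms(1)] off_hub off_hub[unfolded same] by simp_all
    then show ?case
      using same by simp
  qed
qed

lemma dw_walk_unique:
  assumes "n \<ge> 2" and walk: "dw_walk m n w" and walk': "dw_walk m n w'"
    and "length w = length w'" and "length w \<le> n"
    and "hd w = hd w'" and "last w = last w'"
  shows "w = w'"
proof (rule nth_equalityI)
  fix t
  assume t: "t < length w"
  show "w ! t = w' ! t"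
  proof (cases "\<forall>s<t. w ! s \<noteq> 1")
    case True
    then show ?thesis
      using dw_walks_agree_until_hub[OF assms(1) walk walk' assms(4,6) t] by blast
  next
    case False
    then obtain s where s: "s < t" "w ! s = 1"
      by blast
    have "w ! u \<noteq> 1" if "t < u" "u < length w" for u
    proof
      assume "w ! u = 1"
      then have "s = u"
        using dw_walk_hub_at_most_once[OF assms(1) walk assms(5)] s that t by simp
      with s that show False
        by simp
    qed
    then show ?thesis
      using dw_walks_agree_after_hub[OF assms(1) walk walk' assms(4,7) t] by blast
  qed
qed (use assms in simp)

lemma successively_uptI:
  "(\<And>x. a \<le> x \<Longrightarrow> Suc x < b \<Longrightarrow> P x (Suc x)) \<Longrightarrow> successively P [a..<b]"
  unfolding successively_conv_nth by auto

lemma dw_walk_iff_successively: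
  "dw_walk m n w \<longleftrightarrow> w \<noteq> [] \<and> set w \<subseteq> dw_verts m n \<and> successively (dw_edge m n) w"
  unfolding dw_walk_def successively_conv_nth by blast

lemma dw_cycle_subset_verts:
  assumes "k \<in> {1..m}"
  shows "dw_cycle n k \<subseteq> dw_verts m n"
proof -
  have "k - 1 \<le> m - 1"
    using assms by auto
  then have "(k-1)*(n-1) + n \<le> (m-1)*(n-1) + n"
    by (intro add_right_mono mult_le_mono1)
  also have "\<dots> \<le> m*(n-1) + 1"
    using assms by (cases m) auto
  finally show ?thesis
    unfolding dw_cycle_eq dw_verts_def dw_vertex_def by auto
qed

text \<open>Once around the cycle \<open>V\<^sup>k\<close>, starting at its \<open>l\<close>-th vertex; \<open>l = n + 1\<close> starts at the hub.\<close>

definition dw_cycle_walk :: "nat \<Rightarrow> nat \<Rightarrow> nat \<Rightarrow> nat list" where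
  "dw_cycle_walk n k l = map (dw_vertex n k) [l..<n+1] @ 1 # map (dw_vertex n k) [2..<l]"

lemma length_dw_cycle_walk: "l \<in> {2..n+1} \<Longrightarrow> length (dw_cycle_walk n k l) = n"
  unfolding dw_cycle_walk_def by auto

lemma set_dw_cycle_walk: "l \<in> {2..n+1} \<Longrightarrow> set (dw_cycle_walk n k l) \<subseteq> dw_cycle n k"
  unfolding dw_cycle_walk_def dw_cycle_eq by auto

lemma hd_dw_cycle_walk_surj:
  assumes "n \<ge> 1" and "i \<in> dw_cycle n k"
  obtains l where "l \<in> {2..n+1}" and "hd (dw_cycle_walk n k l) = i"
proof -
  consider "i = 1" | l where "l \<in> {2..n}" "i = dw_vertex n k l"
    using assms(2) unfolding dw_cycle_eq by blast
  then show ?thesis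
  proof cases
    case 1
    have "hd (dw_cycle_walk n k (n+1)) = 1"
      unfolding dw_cycle_walk_def by simp
    with 1 show ?thesis
      using that[of "n+1"] assms(1) by simp
  next
    case (2 l)
    then have "hd (dw_cycle_walk n k l) = i"
      unfolding dw_cycle_walk_def by (simp add: upt_rec)
    with 2 show ?thesis
      using that[of l] by simp
  qed
qed

lemma dw_walk_cycle_walk:
  assumes "k \<in> {1..m}" and "l \<in> {2..n+1}"
  shows "dw_walk m n (dw_cycle_walk n k l)"
proof -
  define before_hub where "before_hub = map (dw_vertex n k) [l..<n+1]"
  define after_hub where "after_hub = map (dw_vertex n k) [2..<l]"
  have segment: "successively (dw_edge m n) (map (dw_vertex n k) [a..<b])"
    if "2 \<le> a" "b \<le> n+1" for a b
    unfolding successively_map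
    by (rule successively_uptI, rule dw_edge_along_cycle[OF assms(1)]) (use that in linarith)+
  have "dw_edge m n (dw_vertex n k n) 1" "dw_edge m n 1 (dw_vertex n k 2)"
    using assms(1) unfolding dw_edge_def dw_vertex_def by blast+
  moreover have "before_hub \<noteq> [] \<Longrightarrow> last before_hub = dw_vertex n k n"
    unfolding before_hub_def by (auto simp: last_map)
  moreover have "after_hub \<noteq> [] \<Longrightarrow> hd after_hub = dw_vertex n k 2"
    unfolding after_hub_def by (auto simp: hd_map upt_rec)
  ultimately have into_hub: "before_hub \<noteq> [] \<Longrightarrow> dw_edge m n (last before_hub) 1"
    and out_of_hub: "after_hub \<noteq> [] \<Longrightarrow> dw_edge m n 1 (hd after_hub)"
    by simp_all
  have "successively (dw_edge m n) before_hub" "successively (dw_edge m n) after_hub"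
    unfolding before_hub_def after_hub_def by (rule segment; use assms(2) in simp)+
  then have "successively (dw_edge m n) (before_hub @ 1 # after_hub)"
    using into_hub out_of_hub
    by (cases after_hub) (auto simp: successively_append_iff)
  moreover have "dw_cycle_walk n k l = before_hub @ 1 # after_hub"
    unfolding dw_cycle_walk_def before_hub_def after_hub_def ..
  moreover have "set (dw_cycle_walk n k l) \<subseteq> dw_verts m n"
    using set_dw_cycle_walk[OF assms(2)] dw_cycle_subset_verts[OF assms(1)] by (rule order_trans)
  ultimately show ?thesis
    unfolding dw_walk_iff_successively by simp
qed

lemma dw_walk_last_eq_cycle_pred:
  assumes "n \<ge> 2" and walk: "dw_walk m n w" and "length w = n"
    and "hd w \<in> dw_cycle n k" and "last w \<in> dw_cycle n k"
  shows "last w = dw_cycle_pred n k (hd w)"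
proof -
  have "dw_phase n (last w) = dw_phase n (dw_cycle_pred n k (hd w))"
    using dw_walk_phase_last[OF assms(1) walk] dw_phase_cycle_pred[OF assms(1,4)] assms(3) by simp
  then show ?thesis
    using inj_on_eq_iff[OF dw_phase_inj_on_cycle[OF assms(1)] assms(5)
        dw_cycle_pred_in_cycle[OF assms(1,4)]] by simp
qed

lemma dw_walk_to_cycle_pred_exists:
  assumes "n \<ge> 2" and "k \<in> {1..m}" and "i \<in> dw_cycle n k"
  shows "\<exists>w. dw_walk m n w \<and> length w = n \<and> hd w = i \<and> last w = dw_cycle_pred n k i"
proof -
  obtain l where l: "l \<in> {2..n+1}" and start: "hd (dw_cycle_walk n k l) = i"
    using hd_dw_cycle_walk_surj[OF _ assms(3)] assms(1) by auto
  define w where "w = dw_cycle_walk n k l"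
  have walk: "dw_walk m n w" and length: "length w = n"
    unfolding w_def using dw_walk_cycle_walk[OF assms(2) l] length_dw_cycle_walk[OF l] .
  have "last w \<in> set w"
    using length assms(1) by (intro last_in_set) auto
  then have "last w \<in> dw_cycle n k"
    using set_dw_cycle_walk[OF l] unfolding w_def by blast
  then have "last w = dw_cycle_pred n k i"
    using dw_walk_last_eq_cycle_pred[OF assms(1) walk length] start assms(3) unfolding w_def by simp
  then show ?thesis
    using walk length start unfolding w_def by blast
qed

lemma dw_walk_within_cycle_iff:
  assumes "n \<ge> 2" and "k \<in> {1..m}" and "i \<in> dw_cycle n k" and "j \<in> dw_cycle n k"
  shows "(\<exists>w. dw_walk m n w \<and> length w = n \<and> hd w = i \<and> last w = j) \<longleftrightarrow>
    j = dw_cycle_pred n k i"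
proof
  assume "\<exists>w. dw_walk m n w \<and> length w = n \<and> hd w = i \<and> last w = j"
  then obtain w where "dw_walk m n w" "length w = n" "hd w = i" "last w = j"
    by blast
  then show "j = dw_cycle_pred n k i"
    using dw_walk_last_eq_cycle_pred[OF assms(1), of m w k] assms(3,4) by simp
next
  assume "j = dw_cycle_pred n k i"
  then show "\<exists>w. dw_walk m n w \<and> length w = n \<and> hd w = i \<and> last w = j"
    using dw_walk_to_cycle_pred_exists[OF assms(1-3)] by simp
qed

theorem lemma2p1:
  fixes m n k i j :: nat
  assumes "m \<ge> 1" and "n \<ge> 3" and "k \<in> {1..m}"
    and "i \<in> dw_cycle n k" and "j \<in> dw_cycle n k"
  defines "C \<equiv> (i = 1 \<and> j = (k-1)*(n-1)+n)
              \<or> (i = (k-1)*(n-1)+2 \<and> j = 1)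
              \<or> (\<exists>l\<in>{3..n}. i = (k-1)*(n-1)+l \<and> j = i - 1)"
  shows "((\<exists>w. dw_walk_len_from_to m n (n-1) i j w) \<longleftrightarrow> C)
       \<and> (C \<longrightarrow> (\<exists>!w. dw_walk_len_from_to m n (n-1) i j w))"
proof -
  have n2: "n \<ge> 2"
    using assms(2) by simp
  have walk_iff: "dw_walk_len_from_to m n (n-1) i j w \<longleftrightarrow>
      dw_walk m n w \<and> length w = n \<and> hd w = i \<and> last w = j" for w
    using n2 unfolding dw_walk_len_from_to_def by auto
  have C_iff: "C \<longleftrightarrow> j = dw_cycle_pred n k i"
    using dw_cycle_pred_iff[OF assms(4), of j] unfolding C_def dw_vertex_def .
  have "(\<exists>w. dw_walk_len_from_to m n (n-1) i j w) \<longleftrightarrow> C"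
    unfolding walk_iff C_iff by (rule dw_walk_within_cycle_iff[OF n2 assms(3-5)])
  moreover have "w = w'"
    if "dw_walk_len_from_to m n (n-1) i j w" "dw_walk_len_from_to m n (n-1) i j w'" for w w'
  proof -
    have w: "dw_walk m n w" "length w = n" "hd w = i" "last w = j"
      and w': "dw_walk m n w'" "length w' = n" "hd w' = i" "last w' = j"
      using that unfolding walk_iff by simp_all
    show ?thesis
      by (rule dw_walk_unique[OF n2 w(1) w'(1)]) (use w w' in simp_all)
  qed
  ultimately show ?thesis
    by blast
qed

end
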